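(* In the setting below, assume $K_1:\mathbb{C}^V\to\mathbb{C}^{R\times S}$ is injective and let $\mathcal K_1:\mathbb{C}^{R\times S}\to\mathbb{C}^V$ be a linear left inverse of $K_1$ (e.g. the Moore–Penrose pseudoinverse), with $\mathcal K_j$, $j\ge2$, defined by the recursion below. Let $N\ge1$ and $0<a<1$. Then there is a constant $C_{N,a}$ (depending on $N,a$ and on $p,\alpha_0,G_0,\mathcal K_1$, but not on $\eta$) such that for every $\eta\in\mathbb{C}^V$ with $\mu_p\|\eta\|_p<a$, with scattering data $\phi=\sum_{j\ge1}K_j(\eta,\dots,\eta)$, $$\Big\|\eta-\sum_{j=1}^N\mathcal K_j(\phi,\dots,\phi)\Big\|_p\le C_{N,a}\,\|\eta\|_p^{N+1}.$$
   Context: Setting: Let $V$ and $\delta V$ be finite disjoint sets (interior and boundary vertices of a graph), let $R,S\subseteq\delta V$ be nonempty (receivers and sources), let $\alpha_0>0$, and let $G_0$ (the background Green's function) be a complex matrix with rows and columns indexed by $V\cup\delta V$. For $U,W\subseteq V\cup\delta V$, $G_0^{U;W}$ is the submatrix with rows indexed by $U$ and columns by $W$. For $a\in\mathbb{C}^V$, $D_a$ is the diagonal $V\times V$ matrix with diagonal $a$. For $j\ge1$ define the multilinear map $K_j:(\mathbb{C}^V)^j\to\mathbb{C}^{R\times S}$ by $$K_j(\eta_1,\dots,\eta_j)(r,s)=(-1)^{j+1}\alpha_0^{\,j}\,G_0^{r;V}D_{\eta_1}G_0^{V;V}D_{\eta_2}\cdots G_0^{V;V}D_{\eta_j}G_0^{V;s},\qquad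 r\in R,\ s\in S.$$ Fix $p,q\in[1,\infty]$ with $1/p+1/q=1$; $\|\cdot\|_p$ is the $\ell^p$ norm on $\mathbb{C}^V$ and on $\mathbb{C}^{R\times S}$. Define $\mu_p=\alpha_0\max_{v\in V}\|G_0^{v;V}\|_{\ell^q(V)}$ (when $\mu_p\|\eta\|_p<1$ the series $\sum_jK_j(\eta,\dots,\eta)$ converges). Inverse Born operators: given $\mathcal K_1$, define multilinear maps $\mathcal K_j:(\mathbb{C}^{R\times S})^j\to\mathbb{C}^V$ for $j\ge2$ by $$\mathcal K_j(\phi_1,\dots,\phi_j)=-\sum_{m=1}^{j-1}\ \sum_{\substack{i_1+\dots+i_m=j\\ i_l\ge1}}\mathcal K_m\Big(K_{i_1}(\mathcal K_1\phi_1,\dots,\mathcal K_1\phi_{i_1}),\,K_{i_2}(\mathcal K_1\phi_{i_1+1},\dots,\mathcal K_1\phi_{i_1+i_2}),\dots,K_{i_m}(\mathcal K_1\phi_{j-i_m+1},\dots,\mathcal K_1\phi_j)\Big).$$ *)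

theory Defs
  imports Complex_Main "HOL-Library.Extended_Real"
begin

text \<open>Vectors in C^V are functions 'a => complex (only values on V matter);
  elements of C^(R x S) are functions 'a => 'a => complex (only values on R x S matter);
  G0 is a function 'a => 'a => complex (only values on (V u dV) x (V u dV) matter).\<close>

definition lpnorm :: "'a set \<Rightarrow> ereal \<Rightarrow> ('a \<Rightarrow> complex) \<Rightarrow> real" where
  "lpnorm V p x =
     (if p = \<infinity> then Max (insert 0 ((\<lambda>v. cmod (x v)) ` V))
      else (\<Sum>v\<in>V. cmod (x v) powr real_of_ereal p) powr (1 / real_of_ereal p))"

text \<open>Hoelder conjugate exponent q with 1/p + 1/q = 1.\<close>
definition conj_exp :: "ereal \<Rightarrow> ereal" where
  "conj_exp p = (if p = 1 then \<infinity> else if p = \<infinity> then 1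
                 else ereal (real_of_ereal p / (real_of_ereal p - 1)))"

definition mu :: "'a set \<Rightarrow> real \<Rightarrow> ('a \<Rightarrow> 'a \<Rightarrow> complex) \<Rightarrow> ereal \<Rightarrow> real" where
  "mu V \<alpha>0 G0 p = \<alpha>0 * Max (insert 0 ((\<lambda>v. lpnorm V (conj_exp p) (G0 v)) ` V))"

text \<open>born_chain x [eta1,...,etaj] y =
  G0^{x;V} D_eta1 G0^{V;V} D_eta2 ... G0^{V;V} D_etaj G0^{V;y}.\<close>
fun born_chain :: "'a set \<Rightarrow> ('a \<Rightarrow> 'a \<Rightarrow> complex) \<Rightarrow> 'a \<Rightarrow> ('a \<Rightarrow> complex) list \<Rightarrow> 'a \<Rightarrow> complex" where
  "born_chain V G0 x [] y = G0 x y"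
| "born_chain V G0 x (\<eta> # \<eta>s) y = (\<Sum>v\<in>V. G0 x v * \<eta> v * born_chain V G0 v \<eta>s y)"

text \<open>Forward Born operator K_j, j = length of the argument list.\<close>
definition born :: "'a set \<Rightarrow> real \<Rightarrow> ('a \<Rightarrow> 'a \<Rightarrow> complex) \<Rightarrow> ('a \<Rightarrow> complex) list \<Rightarrow> 'a \<Rightarrow> 'a \<Rightarrow> complex" where
  "born V \<alpha>0 G0 \<eta>s r s =
     (-1) ^ (length \<eta>s + 1) * complex_of_real \<alpha>0 ^ length \<eta>s * born_chain V G0 r \<eta>s s"

fun blocks :: "nat list \<Rightarrow> 'b list \<Rightarrow> 'b list list" where
  "blocks [] xs = []"
| "blocks (i # c) xs = take i xs # blocks c (drop i xs)"

lemma length_blocks [simp]: "length (blocks c xs) = length c"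
  by (induction c arbitrary: xs) auto

definition compositions :: "nat \<Rightarrow> nat list set" where
  "compositions j = {c. sum_list c = j \<and> (\<forall>i\<in>set c. 1 \<le> i)}"

function inv_born :: "'a set \<Rightarrow> real \<Rightarrow> ('a \<Rightarrow> 'a \<Rightarrow> complex)
    \<Rightarrow> (('a \<Rightarrow> 'a \<Rightarrow> complex) \<Rightarrow> ('a \<Rightarrow> complex))
    \<Rightarrow> ('a \<Rightarrow> 'a \<Rightarrow> complex) list \<Rightarrow> 'a \<Rightarrow> complex" where
  "inv_born V \<alpha>0 G0 K1inv \<phi>s =
     (if length \<phi>s = 1 then K1inv (hd \<phi>s)
      else if length \<phi>s < 2 then (\<lambda>_. 0)
      else (\<lambda>v. - (\<Sum>c\<in>{c \<in> compositions (length \<phi>s). 1 \<le> length c \<and> length c \<le> length \<phi>s - 1}.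
              inv_born V \<alpha>0 G0 K1inv
                (map (\<lambda>blk. born V \<alpha>0 G0 (map K1inv blk)) (blocks c \<phi>s)) v)))"
  by pat_completeness auto
termination
  by (relation "measure (\<lambda>(V, \<alpha>0, G0, K1inv, \<phi>s). length \<phi>s)") auto

end

theory Submission
  imports Defs "HOL-Analysis.Convex"
begin

text \<open>The inverse Born operators are defined exactly so that, formally, the sum of
  \<open>\<K>\<^sub>m(K\<^sub>i\<^sub>1 \<eta>, \<dots>, K\<^sub>i\<^sub>m \<eta>)\<close> over all compositions \<open>(i\<^sub>1, \<dots>, i\<^sub>m)\<close> of \<open>n\<close> is \<open>\<eta>\<close>
  for \<open>n = 1\<close> and vanishes for \<open>n \<ge> 2\<close>. Write the data as \<open>\<phi> = K\<^sub>1\<eta> + \<dots> + K\<^sub>N\<eta> + \<tau>\<close>.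
  Hoelder's inequality gives \<open>|K\<^sub>i\<eta>| \<le> c t (\<mu> t)\<^sup>i\<^sup>-\<^sup>1\<close> with \<open>t = \<parallel>\<eta>\<parallel>\<^sub>p\<close>, hence
  \<open>|\<tau>| \<le> c t (\<mu> t)\<^sup>N / (1 - a)\<close>. Expanding each \<open>\<K>\<^sub>j(\<phi>, \<dots>, \<phi>)\<close>, \<open>j \<le> N\<close>, by
  multilinearity, the terms of total order at most \<open>N\<close> sum to \<open>\<eta>\<close>. Every other term has
  total order above \<open>N\<close>; as \<open>\<K>\<^sub>j\<close> is bounded by a constant times the product of the
  norms of its arguments, it is bounded by a constant times \<open>t\<^sup>N\<^sup>+\<^sup>1\<close>, uniformly for \<open>\<mu> t < a\<close>.\<close>

section \<open>Lists, compositions and blocks\<close>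

lemma prod_list_map_mult:
  "prod_list (map (\<lambda>x. f x * g x) xs) = prod_list (map f xs) * (prod_list (map g xs) :: real)"
  by (induction xs) auto

lemma prod_list_map_const_mult:
  "prod_list (map (\<lambda>x. c * f x) xs) = c ^ length xs * (prod_list (map f xs) :: real)"
  by (induction xs) auto

lemma prod_list_map_concat:
  "prod_list (map f (concat xss)) = prod_list (map (\<lambda>xs. prod_list (map f xs)) xss)"
  for f :: "'b \<Rightarrow> real"
  by (induction xss) auto

lemma prod_list_map_mono:
  assumes "\<And>x. x \<in> set xs \<Longrightarrow> 0 \<le> f x \<and> f x \<le> (g x :: real)"
  shows "prod_list (map f xs) \<le> prod_list (map g xs)"
  using assms
proof (induction xs)
  case (Cons a xs)
  have "0 \<le> prod_list (map f xs)" using Cons.prems by (intro prod_list_nonneg) auto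
  then show ?case using Cons by (simp add: mult_mono order.trans[of 0 "f a" "g a"])
qed simp

lemma length_le_sum_list: "\<forall>i\<in>set c. 1 \<le> i \<Longrightarrow> length c \<le> sum_list (c :: nat list)"
  by (induction c) auto

lemma prod_list_map_mult_power_pred:
  "\<forall>i\<in>set c. 1 \<le> i \<Longrightarrow>
     prod_list (map (\<lambda>i. K * x ^ (i - 1)) c) = K ^ length c * (x :: real) ^ (sum_list c - length c)"
proof (induction c)
  case (Cons i c)
  have "length c \<le> sum_list c" using Cons.prems by (intro length_le_sum_list) auto
  then have "sum_list (i # c) - length (i # c) = (i - 1) + (sum_list c - length c)"
    using Cons.prems by simp
  then show ?case using Cons by (simp only: power_add) (simp add: mult_ac)
qed simp

lemma replicate_one_if_length_eq_sum_list:
  "\<forall>i\<in>set c. 1 \<le> i \<Longrightarrow> length c = sum_list (c :: nat list) \<Longrightarrow> c = replicate (length c) 1"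
proof (induction c)
  case (Cons a c)
  have "length c \<le> sum_list c" using Cons.prems by (intro length_le_sum_list) auto
  then have "a = 1" "length c = sum_list c" using Cons.prems by auto
  then show ?case using Cons by auto
qed simp

lemma concat_blocks: "sum_list c = length xs \<Longrightarrow> concat (blocks c xs) = xs"
  by (induction c arbitrary: xs) (auto simp: min_def)

lemma map_length_blocks: "sum_list c = length xs \<Longrightarrow> map length (blocks c xs) = c"
  by (induction c arbitrary: xs) (auto simp: min_def)

lemma blocks_replicate: "sum_list c = n \<Longrightarrow> blocks c (replicate n x) = map (\<lambda>i. replicate i x) c"
proof (induction c arbitrary: n)
  case (Cons i c)
  then show ?case using Cons.IH[of "n - i"] by (simp add: min_def)
qed simp

lemma blocks_append_singleton:
  "length xs < sum_list c \<Longrightarrow>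
     \<exists>B1 pre post B2. \<forall>u. blocks c (xs @ [u] @ ys) = B1 @ [pre @ [u] @ post] @ B2"
proof (induction c arbitrary: xs)
  case (Cons i c)
  show ?case
  proof (cases "length xs < i")
    case True
    then have "\<forall>u. blocks (i # c) (xs @ [u] @ ys) =
       [] @ [xs @ [u] @ take (i - length xs - 1) ys] @ blocks c (drop (i - length xs - 1) ys)"
      by (auto simp: take_append drop_append take_Cons' drop_Cons')
    then show ?thesis by blast
  next
    case False
    then have "length (drop i xs) < sum_list c" using Cons.prems by simp
    from Cons.IH[OF this] obtain B1 pre post B2 where
      "\<forall>u. blocks c (drop i xs @ [u] @ ys) = B1 @ [pre @ [u] @ post] @ B2" by blast
    then have "\<forall>u. blocks (i # c) (xs @ [u] @ ys) = (take i xs # B1) @ [pre @ [u] @ post] @ B2"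
      using False by (simp add: take_append drop_append)
    then show ?thesis by blast
  qed
qed simp

lemma lists_length_Suc_eq:
  "{c. set c \<subseteq> I \<and> length c = Suc j} = (\<lambda>(i, c). i # c) ` (I \<times> {c. set c \<subseteq> I \<and> length c = j})"
  by (auto simp: length_Suc_conv image_iff)

lemma finite_compositions: "finite (compositions n)"
proof (rule finite_subset)
  show "compositions n \<subseteq> {xs. set xs \<subseteq> {0..n} \<and> length xs \<le> n}"
    using length_le_sum_list member_le_sum_list by (fastforce simp: compositions_def)
qed (rule finite_lists_length_le, simp)

definition proper_compositions :: "nat \<Rightarrow> nat list set" where
  "proper_compositions n = {c \<in> compositions n. 1 \<le> length c \<and> length c \<le> n - 1}"

lemma compositions_eq_insert_proper:
  assumes "1 \<le> n"
  shows "compositions n = insert (replicate n 1) (proper_compositions n)"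
proof (intro set_eqI iffI)
  fix c assume c: "c \<in> compositions n"
  then have p: "\<forall>i\<in>set c. 1 \<le> i" and s: "sum_list c = n" by (auto simp: compositions_def)
  have "c \<noteq> []" using s assms by auto
  then show "c \<in> insert (replicate n 1) (proper_compositions n)"
    using length_le_sum_list[OF p] replicate_one_if_length_eq_sum_list[OF p] s c
    by (cases "length c = n") (auto simp: proper_compositions_def Suc_le_eq)
qed (auto simp: proper_compositions_def compositions_def sum_list_replicate)

section \<open>Norms and Hoelder's inequality\<close>

lemma ereal_ge1_cases:
  assumes "1 \<le> (p :: ereal)"
  obtains "p = \<infinity>" | P where "p = ereal P" "1 \<le> P"
  using assms by (cases p) auto

lemma lpnorm_nonneg: "finite V \<Longrightarrow> 0 \<le> lpnorm V p x"
  unfolding lpnorm_def by (auto intro: Max_ge)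

lemma lpnorm_le_card_bound:
  assumes V: "finite V" and p: "1 \<le> p" and B: "0 \<le> B" and h: "\<And>v. v \<in> V \<Longrightarrow> cmod (x v) \<le> B"
  shows "lpnorm V p x \<le> (real (card V) + 1) * B"
  using p
proof (cases rule: ereal_ge1_cases)
  case 1
  have "Max (insert 0 ((\<lambda>v. cmod (x v)) ` V)) \<le> B" using V B h by (subst Max_le_iff) auto
  also have "B \<le> (real (card V) + 1) * B" using B by (simp add: algebra_simps)
  finally show ?thesis using 1 by (simp add: lpnorm_def)
next
  case (2 P)
  define D where "D = real (card V) + 1"
  have D1: "1 \<le> D" by (simp add: D_def)
  have "(\<Sum>w\<in>V. cmod (x w) powr P) \<le> (\<Sum>w\<in>V. B powr P)"
    using h 2 by (intro sum_mono powr_mono2) auto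
  also have "\<dots> = real (card V) * B powr P" by simp
  also have "\<dots> \<le> D powr 1 * B powr P" using D1 by (intro mult_right_mono) (auto simp: D_def)
  also have "\<dots> \<le> D powr P * B powr P" using D1 2 by (intro mult_right_mono powr_mono) auto
  also have "\<dots> = (D * B) powr P" by (simp add: powr_mult)
  finally have "(\<Sum>w\<in>V. cmod (x w) powr P) powr (1 / P) \<le> ((D * B) powr P) powr (1 / P)"
    using 2 by (intro powr_mono2) (auto intro: sum_nonneg)
  also have "\<dots> = D * B" using 2 D1 B by (simp add: powr_powr)
  finally show ?thesis using 2 by (simp add: lpnorm_def D_def)
qed

lemma Hoelder_inequality_sum:
  fixes f g :: "'a \<Rightarrow> real"
  assumes V: "finite V" and PQ: "1 < P" "1 < Q" "1 / P + 1 / Q = 1"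
    and fg: "\<And>v. 0 \<le> f v" "\<And>v. 0 \<le> g v"
  shows "(\<Sum>v\<in>V. f v * g v) \<le> (\<Sum>v\<in>V. f v powr Q) powr (1 / Q) * (\<Sum>v\<in>V. g v powr P) powr (1 / P)"
proof -
  define A where "A = (\<Sum>v\<in>V. f v powr Q) powr (1 / Q)"
  define B where "B = (\<Sum>v\<in>V. g v powr P) powr (1 / P)"
  show ?thesis
  proof (cases "A = 0 \<or> B = 0")
    case True
    then have "(\<forall>v\<in>V. f v = 0) \<or> (\<forall>v\<in>V. g v = 0)"
      unfolding A_def B_def using V by (auto simp: sum_nonneg_eq_0_iff)
    then show ?thesis using True A_def B_def by auto
  next
    case False
    have A0: "0 < A" "0 < B" using False by (auto simp: A_def B_def)
    have AQ: "A powr Q = (\<Sum>v\<in>V. f v powr Q)" using PQ by (simp add: A_def powr_powr sum_nonneg)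
    have BP: "B powr P = (\<Sum>v\<in>V. g v powr P)" using PQ by (simp add: B_def powr_powr sum_nonneg)
    \<comment> \<open>Young's inequality for the normalised functions \<open>f / A\<close> and \<open>g / B\<close>\<close>
    have "(\<Sum>v\<in>V. (f v / A) * (g v / B)) \<le> (\<Sum>v\<in>V. (f v / A) powr Q / Q + (g v / B) powr P / P)"
      using PQ fg A0 by (intro sum_mono) (metis Youngs_inequality add.commute less_eq_real_def divide_nonneg_pos)
    also have "\<dots> = (\<Sum>v\<in>V. f v powr Q) / A powr Q / Q + (\<Sum>v\<in>V. g v powr P) / B powr P / P"
      by (simp add: powr_divide sum.distrib sum_divide_distrib)
    also have "\<dots> = 1"
      unfolding AQ[symmetric] BP[symmetric] using PQ A0 by (simp add: add.commute)
    finally have "(\<Sum>v\<in>V. f v * g v) / (A * B) \<le> 1" by (simp add: sum_divide_distrib)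
    then show ?thesis using A0 by (simp add: A_def[symmetric] B_def[symmetric] pos_divide_le_eq)
  qed
qed

lemma lpnorm_Hoelder:
  assumes V: "finite V" and p: "1 \<le> p"
  shows "(\<Sum>v\<in>V. cmod (a v) * cmod (b v)) \<le> lpnorm V (conj_exp p) a * lpnorm V p b"
  using p
proof (cases rule: ereal_ge1_cases)
  case 1
  have "(\<Sum>v\<in>V. cmod (a v) * cmod (b v)) \<le> (\<Sum>v\<in>V. cmod (a v) * Max (insert 0 ((\<lambda>v. cmod (b v)) ` V)))"
    using V by (intro sum_mono mult_left_mono Max_ge) auto
  then show ?thesis using 1 by (simp add: lpnorm_def conj_exp_def sum_distrib_right sum_nonneg)
next
  case (2 P)
  show ?thesis
  proof (cases "P = 1")
    case True
    have "(\<Sum>v\<in>V. cmod (a v) * cmod (b v)) \<le> (\<Sum>v\<in>V. Max (insert 0 ((\<lambda>v. cmod (a v)) ` V)) * cmod (b v))"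
      using V by (intro sum_mono mult_right_mono Max_ge) auto
    then show ?thesis using 2 True by (simp add: lpnorm_def conj_exp_def one_ereal_def sum_distrib_left sum_nonneg)
  next
    case False
    define Q where "Q = P / (P - 1)"
    have P1: "1 < P" using 2 False by simp
    have Q1: "1 < Q" using P1 by (simp add: Q_def)
    have PQ: "1 / P + 1 / Q = 1" using P1 by (simp add: Q_def field_simps)
    have "conj_exp p = ereal Q" using 2 False by (simp add: conj_exp_def Q_def one_ereal_def)
    then show ?thesis
      using Hoelder_inequality_sum[OF V P1 Q1 PQ, of "\<lambda>v. cmod (a v)" "\<lambda>v. cmod (b v)"] 2
      by (simp add: lpnorm_def)
  qed
qed

lemma mu_nonneg: "finite V \<Longrightarrow> 0 \<le> \<alpha>0 \<Longrightarrow> 0 \<le> mu V \<alpha>0 G0 p"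
  unfolding mu_def by (intro mult_nonneg_nonneg Max_ge) auto

lemma lpnorm_Green_le_mu:
  "finite V \<Longrightarrow> 0 \<le> \<alpha>0 \<Longrightarrow> x \<in> V \<Longrightarrow> \<alpha>0 * lpnorm V (conj_exp p) (G0 x) \<le> mu V \<alpha>0 G0 p"
  unfolding mu_def by (intro mult_left_mono Max_ge) auto

definition max_norm :: "'a set \<Rightarrow> 'a set \<Rightarrow> ('a \<Rightarrow> 'a \<Rightarrow> complex) \<Rightarrow> real" where
  "max_norm R S \<psi> = Max (insert 0 ((\<lambda>(r, s). cmod (\<psi> r s)) ` (R \<times> S)))"

lemma max_norm_nonneg: "finite R \<Longrightarrow> finite S \<Longrightarrow> 0 \<le> max_norm R S \<psi>"
  unfolding max_norm_def by (rule Max_ge) auto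

lemma norm_le_max_norm:
  "finite R \<Longrightarrow> finite S \<Longrightarrow> r \<in> R \<Longrightarrow> s \<in> S \<Longrightarrow> cmod (\<psi> r s) \<le> max_norm R S \<psi>"
  unfolding max_norm_def by (rule Max_ge) force+

lemma max_norm_le:
  "finite R \<Longrightarrow> finite S \<Longrightarrow> 0 \<le> B \<Longrightarrow> (\<And>r s. r \<in> R \<Longrightarrow> s \<in> S \<Longrightarrow> cmod (\<psi> r s) \<le> B)
     \<Longrightarrow> max_norm R S \<psi> \<le> B"
  unfolding max_norm_def by (subst Max_le_iff) auto

section \<open>Forward Born operators\<close>

lemma born_Nil: "born V \<alpha>0 G0 [] x y = - G0 x y"
  by (simp add: born_def)

lemma born_Cons:
  "born V \<alpha>0 G0 (\<eta> # \<eta>s) x y = - of_real \<alpha>0 * (\<Sum>v\<in>V. G0 x v * \<eta> v * born V \<alpha>0 G0 \<eta>s v y)"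
  by (simp add: born_def sum_distrib_left sum_distrib_right mult_ac)

lemma norm_born_Cons_le:
  assumes V: "finite V" and p: "1 \<le> p" and "0 \<le> \<alpha>0" "0 \<le> B"
    and B: "\<forall>v\<in>V. cmod (born V \<alpha>0 G0 \<eta>s v y) \<le> B"
  shows "cmod (born V \<alpha>0 G0 (\<eta> # \<eta>s) x y) \<le> \<alpha>0 * lpnorm V (conj_exp p) (G0 x) * lpnorm V p \<eta> * B"
proof -
  have "cmod (born V \<alpha>0 G0 (\<eta> # \<eta>s) x y)
      \<le> \<alpha>0 * (\<Sum>v\<in>V. cmod (G0 x v) * cmod (\<eta> v) * cmod (born V \<alpha>0 G0 \<eta>s v y))"
    using assms by (auto simp: born_Cons norm_mult intro!: mult_left_mono order.trans[OF norm_sum])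
  also have "\<dots> \<le> \<alpha>0 * ((\<Sum>v\<in>V. cmod (G0 x v) * cmod (\<eta> v)) * B)"
    using assms by (auto simp: sum_distrib_right intro!: mult_left_mono sum_mono)
  also have "\<dots> \<le> \<alpha>0 * (lpnorm V (conj_exp p) (G0 x) * lpnorm V p \<eta> * B)"
    using assms lpnorm_Hoelder[OF V p] by (intro mult_left_mono mult_right_mono) auto
  finally show ?thesis by (simp add: mult_ac)
qed

lemma norm_born_le:
  assumes V: "finite V" and p: "1 \<le> p" and "0 \<le> \<alpha>0" "0 \<le> g"
    and g: "\<forall>v\<in>V. cmod (G0 v y) \<le> g" and x: "x \<in> V"
  shows "cmod (born V \<alpha>0 G0 \<eta>s x y) \<le> g * prod_list (map (\<lambda>\<eta>. mu V \<alpha>0 G0 p * lpnorm V p \<eta>) \<eta>s)"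
  using x
proof (induction \<eta>s arbitrary: x)
  case Nil
  then show ?case using g by (simp add: born_Nil)
next
  case (Cons \<eta> \<eta>s)
  define B where "B = g * prod_list (map (\<lambda>\<eta>. mu V \<alpha>0 G0 p * lpnorm V p \<eta>) \<eta>s)"
  have B0: "0 \<le> B" unfolding B_def using assms
    by (intro mult_nonneg_nonneg prod_list_nonneg) (auto intro!: mult_nonneg_nonneg mu_nonneg lpnorm_nonneg)
  have "cmod (born V \<alpha>0 G0 (\<eta> # \<eta>s) x y) \<le> \<alpha>0 * lpnorm V (conj_exp p) (G0 x) * lpnorm V p \<eta> * B"
    using Cons.IH B0 assms by (intro norm_born_Cons_le) (auto simp: B_def)
  also have "\<dots> \<le> mu V \<alpha>0 G0 p * lpnorm V p \<eta> * B"
    using lpnorm_Green_le_mu[OF V _ Cons.prems] assms B0 lpnorm_nonneg[OF V]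
    by (intro mult_right_mono) auto
  finally show ?case by (simp add: B_def mult_ac)
qed

lemma norm_born_Cons_boundary_le:
  assumes V: "finite V" and p: "1 \<le> p" and "0 \<le> \<alpha>0" "0 \<le> g"
    and g: "\<forall>v\<in>V. cmod (G0 v s) \<le> g" and gR: "lpnorm V (conj_exp p) (G0 r) \<le> gR"
  shows "cmod (born V \<alpha>0 G0 (\<eta> # \<eta>s) r s)
     \<le> \<alpha>0 * gR * g * lpnorm V p \<eta> * prod_list (map (\<lambda>\<eta>. mu V \<alpha>0 G0 p * lpnorm V p \<eta>) \<eta>s)"
proof -
  define B where "B = g * prod_list (map (\<lambda>\<eta>. mu V \<alpha>0 G0 p * lpnorm V p \<eta>) \<eta>s)"
  have B0: "0 \<le> B" unfolding B_def using assms
    by (intro mult_nonneg_nonneg prod_list_nonneg) (auto intro!: mult_nonneg_nonneg mu_nonneg lpnorm_nonneg)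
  have "cmod (born V \<alpha>0 G0 (\<eta> # \<eta>s) r s) \<le> \<alpha>0 * lpnorm V (conj_exp p) (G0 r) * lpnorm V p \<eta> * B"
    using norm_born_le[OF V p] B0 assms by (intro norm_born_Cons_le) (auto simp: B_def)
  also have "\<dots> \<le> \<alpha>0 * gR * lpnorm V p \<eta> * B"
    using assms B0 lpnorm_nonneg[OF V] by (intro mult_right_mono mult_left_mono) auto
  finally show ?thesis by (simp add: B_def mult_ac)
qed

lemma born_chain_cong:
  "list_all2 (\<lambda>\<eta> \<eta>'. \<forall>v\<in>V. \<eta> v = \<eta>' v) \<eta>s \<eta>s' \<Longrightarrow> born_chain V G0 x \<eta>s y = born_chain V G0 x \<eta>s' y"
proof (induction \<eta>s arbitrary: \<eta>s' x)
  case (Cons a \<eta>s)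
  then show ?case by (cases \<eta>s') (auto intro!: sum.cong)
qed simp

lemma born_cong:
  "list_all2 (\<lambda>\<eta> \<eta>'. \<forall>v\<in>V. \<eta> v = \<eta>' v) \<eta>s \<eta>s' \<Longrightarrow> born V \<alpha>0 G0 \<eta>s = born V \<alpha>0 G0 \<eta>s'"
  by (auto simp: born_def fun_eq_iff list_all2_lengthD intro!: born_chain_cong)

lemma born_chain_linear_slot:
  "born_chain V G0 x (xs @ [\<lambda>v. c * z v + w v] @ ys) y
     = c * born_chain V G0 x (xs @ [z] @ ys) y + born_chain V G0 x (xs @ [w] @ ys) y"
  by (induction xs arbitrary: x) (simp_all add: algebra_simps sum.distrib sum_distrib_left)

lemma born_linear_slot:
  assumes "\<forall>v\<in>V. u v = c * z v + w v"
  shows "born V \<alpha>0 G0 (xs @ [u] @ ys)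
     = (\<lambda>r s. c * born V \<alpha>0 G0 (xs @ [z] @ ys) r s + born V \<alpha>0 G0 (xs @ [w] @ ys) r s)"
proof -
  have "born V \<alpha>0 G0 (xs @ [u] @ ys) = born V \<alpha>0 G0 (xs @ [\<lambda>v. c * z v + w v] @ ys)"
    using assms by (intro born_cong) (auto simp: list_all2_append list_all2_refl)
  also have "\<dots> = (\<lambda>r s. c * born V \<alpha>0 G0 (xs @ [z] @ ys) r s + born V \<alpha>0 G0 (xs @ [w] @ ys) r s)"
    unfolding born_def born_chain_linear_slot by (simp add: fun_eq_iff algebra_simps)
  finally show ?thesis .
qed

section \<open>Inverse Born operators\<close>

declare inv_born.simps [simp del]

lemma inv_born_Nil: "inv_born V \<alpha>0 G0 L [] = (\<lambda>_. 0)"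
  by (subst inv_born.simps) simp

lemma inv_born_single: "inv_born V \<alpha>0 G0 L [\<psi>] = L \<psi>"
  by (subst inv_born.simps) simp

lemma inv_born_rec:
  "2 \<le> length \<psi>s \<Longrightarrow> inv_born V \<alpha>0 G0 L \<psi>s =
     (\<lambda>v. - (\<Sum>c\<in>proper_compositions (length \<psi>s).
        inv_born V \<alpha>0 G0 L (map (\<lambda>blk. born V \<alpha>0 G0 (map L blk)) (blocks c \<psi>s)) v))"
  by (subst inv_born.simps) (simp add: proper_compositions_def)

locale inverse_born =
  fixes V R S :: "'a set" and \<alpha>0 :: real and G0 :: "'a \<Rightarrow> 'a \<Rightarrow> complex" and p :: ereal
    and L :: "('a \<Rightarrow> 'a \<Rightarrow> complex) \<Rightarrow> ('a \<Rightarrow> complex)"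
  assumes finite_V: "finite V" and finite_R: "finite R" and finite_S: "finite S"
    and alpha_pos: "0 < \<alpha>0" and p_ge_1: "1 \<le> p"
    and L_cong: "\<And>\<phi> \<psi>. (\<forall>r\<in>R. \<forall>s\<in>S. \<phi> r s = \<psi> r s) \<Longrightarrow> (\<forall>v\<in>V. L \<phi> v = L \<psi> v)"
    and L_linear: "\<And>\<phi> \<psi> c. \<forall>v\<in>V. L (\<lambda>r s. c * \<phi> r s + \<psi> r s) v = c * L \<phi> v + L \<psi> v"
    and L_left_inverse: "\<And>\<eta>. \<forall>v\<in>V. L (born V \<alpha>0 G0 [\<eta>]) v = \<eta> v"
begin

abbreviation "iborn \<equiv> inv_born V \<alpha>0 G0 L"
abbreviation "block_born blk \<equiv> born V \<alpha>0 G0 (map L blk)"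
abbreviation "data_norm \<equiv> max_norm R S"

lemma block_born_linear_slot:
  "block_born (pre @ [\<lambda>r s. a * z r s + w r s] @ post)
     = (\<lambda>r s. a * block_born (pre @ [z] @ post) r s + block_born (pre @ [w] @ post) r s)"
  using born_linear_slot[of V "L (\<lambda>r s. a * z r s + w r s)" a "L z" "L w"] L_linear by simp

lemma iborn_linear_slot:
  "v \<in> V \<Longrightarrow>
     iborn (xs @ [\<lambda>r s. a * z r s + w r s] @ ys) v = a * iborn (xs @ [z] @ ys) v + iborn (xs @ [w] @ ys) v"
proof (induction "length (xs @ ys)" arbitrary: xs ys z w a v rule: less_induct)
  \<comment> \<open>A proper composition has fewer blocks than there are arguments, and the slot lies in
    exactly one block, on which \<open>block_born\<close> is linear.\<close>
  case less
  show ?case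
  proof (cases "xs = [] \<and> ys = []")
    case True
    then show ?thesis using L_linear less.prems by (simp add: inv_born_single)
  next
    case False
    define n where "n = length (xs @ ys) + 1"
    have n2: "2 \<le> n" using False by (cases xs; cases ys) (auto simp: n_def)
    have block: "iborn (map block_born (blocks c (xs @ [\<lambda>r s. a * z r s + w r s] @ ys))) v
       = a * iborn (map block_born (blocks c (xs @ [z] @ ys))) v + iborn (map block_born (blocks c (xs @ [w] @ ys))) v"
      if c: "c \<in> proper_compositions n" for c
    proof -
      have "sum_list c = n" "length c \<le> n - 1" using c by (auto simp: proper_compositions_def compositions_def)
      then have "length xs < sum_list c" by (simp add: n_def)
      from blocks_append_singleton[OF this, of ys] obtain B1 pre post B2 where
        B: "\<forall>u. blocks c (xs @ [u] @ ys) = B1 @ [pre @ [u] @ post] @ B2" by blast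
      have "length c = length (B1 @ [pre @ [z] @ post] @ B2)"
        using arg_cong[OF spec[OF B, of z], of length] by (simp del: append.simps append_Cons)
      then have shorter: "length (map block_born B1 @ map block_born B2) < length (xs @ ys)"
        using \<open>length c \<le> n - 1\<close> n2 by (simp add: n_def)
      have blocks_u: "map block_born (blocks c (xs @ [u] @ ys))
          = map block_born B1 @ [block_born (pre @ [u] @ post)] @ map block_born B2" for u
        using B by simp
      show ?thesis
        unfolding blocks_u block_born_linear_slot
        using less.hyps[where z = "block_born (pre @ [z] @ post)" and w = "block_born (pre @ [w] @ post)",
            OF shorter]
          less.prems by simp
    qed
    have len: "length (xs @ [\<lambda>r s. a * z r s + w r s] @ ys) = n"
      "length (xs @ [z] @ ys) = n" "length (xs @ [w] @ ys) = n" by (auto simp: n_def)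
    have "(\<Sum>c\<in>proper_compositions n. iborn (map block_born (blocks c (xs @ [\<lambda>r s. a * z r s + w r s] @ ys))) v)
       = (\<Sum>c\<in>proper_compositions n. a * iborn (map block_born (blocks c (xs @ [z] @ ys))) v
           + iborn (map block_born (blocks c (xs @ [w] @ ys))) v)"
      by (rule sum.cong[OF refl block])
    then show ?thesis
      unfolding inv_born_rec[OF n2[folded len(1)]] inv_born_rec[OF n2[folded len(2)]]
        inv_born_rec[OF n2[folded len(3)]] len
      by (simp add: sum.distrib sum_distrib_left)
  qed
qed

lemma iborn_zero_slot: "v \<in> V \<Longrightarrow> iborn (xs @ [\<lambda>r s. 0] @ ys) v = 0"
  using iborn_linear_slot[of v xs 1 "\<lambda>r s. 0" "\<lambda>r s. 0" ys] by simp

lemma iborn_sum_slot: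
  assumes "finite I" "v \<in> V"
  shows "iborn (xs @ [\<lambda>r s. \<Sum>i\<in>I. Q i r s] @ ys) v = (\<Sum>i\<in>I. iborn (xs @ [Q i] @ ys) v)"
  using assms(1)
proof (induction I rule: finite_induct)
  case empty
  then show ?case using iborn_zero_slot[OF assms(2)] by simp
next
  case (insert x F)
  have split: "(\<lambda>r s. \<Sum>i\<in>insert x F. Q i r s) = (\<lambda>r s. 1 * Q x r s + (\<Sum>i\<in>F. Q i r s))"
    using insert by simp
  show ?case unfolding split iborn_linear_slot[OF assms(2)] using insert by simp
qed

lemma iborn_replicate_sum:
  assumes "finite I" "v \<in> V"
  shows "iborn (xs @ replicate j (\<lambda>r s. \<Sum>i\<in>I. Q i r s)) v
           = (\<Sum>c\<in>{c. set c \<subseteq> I \<and> length c = j}. iborn (xs @ map Q c) v)"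
proof (induction j arbitrary: xs)
  case 0
  have "{c. set c \<subseteq> I \<and> length c = 0} = {[]}" by auto
  then show ?case by simp
next
  case (Suc j)
  have "iborn (xs @ replicate (Suc j) (\<lambda>r s. \<Sum>i\<in>I. Q i r s)) v
      = (\<Sum>i\<in>I. iborn ((xs @ [Q i]) @ replicate j (\<lambda>r s. \<Sum>i\<in>I. Q i r s)) v)"
    using iborn_sum_slot[OF assms] by simp
  also have "\<dots> = (\<Sum>i\<in>I. \<Sum>c\<in>{c. set c \<subseteq> I \<and> length c = j}. iborn (xs @ map Q (i # c)) v)"
    using Suc.IH[of "xs @ [Q _]"] by (intro sum.cong) auto
  also have "\<dots> = (\<Sum>c\<in>{c. set c \<subseteq> I \<and> length c = Suc j}. iborn (xs @ map Q c) v)"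
    unfolding lists_length_Suc_eq sum.cartesian_product
    by (subst sum.reindex) (auto simp: inj_on_def case_prod_beta)
  finally show ?case .
qed

lemma L_sum: "finite X \<Longrightarrow> v \<in> V \<Longrightarrow> L (\<lambda>r s. \<Sum>x\<in>X. Q x r s) v = (\<Sum>x\<in>X. L (Q x) v)"
  using iborn_sum_slot[of X v "[]" Q "[]"] by (simp add: inv_born_single)

lemma L_scale: "v \<in> V \<Longrightarrow> L (\<lambda>r s. c * \<phi> r s) v = c * L \<phi> v"
  using L_linear[of c \<phi> "\<lambda>r s. 0"] iborn_zero_slot[of v "[]" "[]"] by (simp add: inv_born_single)

text \<open>Expand \<open>\<psi>\<close> in the standard basis of \<open>\<complex>^(R \<times> S)\<close>.\<close>
lemma L_bounded: "\<exists>CL\<ge>0. \<forall>\<psi>. \<forall>v\<in>V. cmod (L \<psi> v) \<le> CL * data_norm \<psi>"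
proof -
  define E where "E = (\<lambda>x :: 'a \<times> 'a. \<lambda>r' s'. if (r', s') = x then (1 :: complex) else 0)"
  define CL where "CL = (\<Sum>v\<in>V. \<Sum>x\<in>R \<times> S. cmod (L (E x) v))"
  have fin: "finite (R \<times> S)" using finite_R finite_S by simp
  have "cmod (L \<psi> v) \<le> CL * data_norm \<psi>" if v: "v \<in> V" for \<psi> v
  proof -
    have "\<forall>r\<in>R. \<forall>s\<in>S. \<psi> r s = (\<Sum>x\<in>R \<times> S. \<psi> (fst x) (snd x) * E x r s)"
    proof (intro ballI)
      fix r s assume "r \<in> R" "s \<in> S"
      then have "(\<Sum>x\<in>R \<times> S. \<psi> (fst x) (snd x) * E x r s) = (\<Sum>x\<in>R \<times> S. if x = (r, s) then \<psi> r s else 0)"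
        by (intro sum.cong) (auto simp: E_def)
      then show "\<psi> r s = (\<Sum>x\<in>R \<times> S. \<psi> (fst x) (snd x) * E x r s)" using fin \<open>r \<in> R\<close> \<open>s \<in> S\<close> by simp
    qed
    then have "L \<psi> v = (\<Sum>x\<in>R \<times> S. \<psi> (fst x) (snd x) * L (E x) v)"
      using L_cong v by (simp add: L_sum[OF fin v, symmetric] L_scale[OF v, symmetric])
    then have "cmod (L \<psi> v) \<le> (\<Sum>x\<in>R \<times> S. cmod (\<psi> (fst x) (snd x)) * cmod (L (E x) v))"
      by (simp add: norm_mult[symmetric] norm_sum)
    also have "\<dots> \<le> (\<Sum>x\<in>R \<times> S. data_norm \<psi> * cmod (L (E x) v))"
      by (intro sum_mono mult_right_mono) (auto intro!: norm_le_max_norm finite_R finite_S)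
    also have "\<dots> \<le> data_norm \<psi> * CL" unfolding CL_def sum_distrib_left[symmetric]
      by (intro mult_left_mono member_le_sum[OF v]) (auto intro!: sum_nonneg max_norm_nonneg finite_R finite_S finite_V)
    finally show ?thesis by (simp add: mult.commute)
  qed
  moreover have "0 \<le> CL" unfolding CL_def by (auto intro!: sum_nonneg)
  ultimately show ?thesis by blast
qed

lemma lpnorm_L_le: "\<exists>CL\<ge>0. \<forall>\<psi>. lpnorm V p (L \<psi>) \<le> CL * data_norm \<psi>"
proof -
  obtain CL where "CL \<ge> 0" "\<forall>\<psi>. \<forall>v\<in>V. cmod (L \<psi> v) \<le> CL * data_norm \<psi>" using L_bounded by blast
  then have "\<forall>\<psi>. lpnorm V p (L \<psi>) \<le> ((real (card V) + 1) * CL) * data_norm \<psi>"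
    using finite_R finite_S
    by (auto simp: mult.assoc intro!: lpnorm_le_card_bound finite_V p_ge_1 max_norm_nonneg mult_nonneg_nonneg)
  then show ?thesis using \<open>CL \<ge> 0\<close> by (intro exI[of _ "(real (card V) + 1) * CL"]) auto
qed

definition "green_RV_bound = Max (insert 0 ((\<lambda>r. lpnorm V (conj_exp p) (G0 r)) ` R))"
definition "green_VS_bound = Max (insert 0 ((\<lambda>(v, s). cmod (G0 v s)) ` (V \<times> S)))"

lemma green_bounds_nonneg: "0 \<le> green_RV_bound" "0 \<le> green_VS_bound"
  unfolding green_RV_bound_def green_VS_bound_def
  by (auto intro!: Max_ge finite_R finite_S finite_V)

lemma norm_born_Cons_data_le:
  assumes "r \<in> R" "s \<in> S"
  shows "cmod (born V \<alpha>0 G0 (\<eta> # \<eta>s) r s) \<le> \<alpha>0 * green_RV_bound * green_VS_bound * lpnorm V p \<eta>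
           * prod_list (map (\<lambda>\<eta>. mu V \<alpha>0 G0 p * lpnorm V p \<eta>) \<eta>s)"
proof (rule norm_born_Cons_boundary_le[OF finite_V p_ge_1])
  show "\<forall>v\<in>V. cmod (G0 v s) \<le> green_VS_bound" "lpnorm V (conj_exp p) (G0 r) \<le> green_RV_bound"
    unfolding green_RV_bound_def green_VS_bound_def using assms
    by (force intro!: Max_ge finite_R finite_S finite_V)+
qed (use alpha_pos green_bounds_nonneg in auto)

lemma block_born_bound:
  "\<exists>Bb. (\<forall>n. 0 \<le> Bb n) \<and>
     (\<forall>blk. blk \<noteq> [] \<longrightarrow> data_norm (block_born blk) \<le> Bb (length blk) * prod_list (map data_norm blk))"
proof -
  obtain CL where CL: "CL \<ge> 0" "\<And>\<psi>. lpnorm V p (L \<psi>) \<le> CL * data_norm \<psi>" using lpnorm_L_le by blast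
  define \<mu> where "\<mu> = mu V \<alpha>0 G0 p"
  define k where "k = \<alpha>0 * green_RV_bound * green_VS_bound"
  define Bb where "Bb n = k * CL ^ n * \<mu> ^ (n - 1)" for n
  have \<mu>0: "0 \<le> \<mu>" unfolding \<mu>_def using finite_V alpha_pos by (simp add: mu_nonneg)
  have k0: "0 \<le> k" unfolding k_def using alpha_pos green_bounds_nonneg by simp
  have M0: "0 \<le> data_norm \<psi>" for \<psi> using finite_R finite_S by (rule max_norm_nonneg)
  have "data_norm (block_born (\<psi> # \<psi>s)) \<le> Bb (length (\<psi> # \<psi>s)) * prod_list (map data_norm (\<psi> # \<psi>s))"
    for \<psi> \<psi>s
  proof (rule max_norm_le[OF finite_R finite_S])
    show "0 \<le> Bb (length (\<psi> # \<psi>s)) * prod_list (map data_norm (\<psi> # \<psi>s))"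
      unfolding Bb_def using k0 CL \<mu>0 M0 by (auto intro!: mult_nonneg_nonneg prod_list_nonneg)
    fix r s assume "r \<in> R" "s \<in> S"
    then have "cmod (block_born (\<psi> # \<psi>s) r s)
        \<le> k * lpnorm V p (L \<psi>) * prod_list (map (\<lambda>\<psi>. \<mu> * lpnorm V p (L \<psi>)) \<psi>s)"
      using norm_born_Cons_data_le[of r s "L \<psi>" "map L \<psi>s"] by (simp add: k_def \<mu>_def o_def)
    also have "\<dots> \<le> k * (CL * data_norm \<psi>) * prod_list (map (\<lambda>\<psi>. (\<mu> * CL) * data_norm \<psi>) \<psi>s)"
      using k0 \<mu>0 CL M0 lpnorm_nonneg[OF finite_V]
      by (intro mult_mono prod_list_map_mono prod_list_nonneg) (auto simp: mult.assoc intro!: mult_left_mono)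
    also have "\<dots> = Bb (length (\<psi> # \<psi>s)) * prod_list (map data_norm (\<psi> # \<psi>s))"
      unfolding prod_list_map_const_mult Bb_def by (simp add: power_mult_distrib mult_ac)
    finally show "cmod (block_born (\<psi> # \<psi>s) r s) \<le> \<dots>" .
  qed
  moreover have "\<forall>n. 0 \<le> Bb n" unfolding Bb_def using k0 CL \<mu>0 by simp
  ultimately show ?thesis by (metis neq_Nil_conv)
qed

lemma prod_data_norm_blocks_le:
  assumes Bb: "\<forall>blk. blk \<noteq> [] \<longrightarrow> data_norm (block_born blk) \<le> Bb (length blk) * prod_list (map data_norm blk)"
    and c: "c \<in> compositions (length \<psi>s)"
  shows "prod_list (map data_norm (map block_born (blocks c \<psi>s)))
           \<le> prod_list (map Bb c) * prod_list (map data_norm \<psi>s)"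
proof -
  have sc: "sum_list c = length \<psi>s" and pos: "\<forall>i\<in>set c. 1 \<le> i" using c by (auto simp: compositions_def)
  have nonempty: "blk \<noteq> []" if "blk \<in> set (blocks c \<psi>s)" for blk
  proof -
    have "length blk \<in> set c" using that map_length_blocks[OF sc] by (metis image_eqI set_map)
    then show ?thesis using pos by fastforce
  qed
  have "prod_list (map data_norm (map block_born (blocks c \<psi>s)))
      \<le> prod_list (map (\<lambda>blk. Bb (length blk) * prod_list (map data_norm blk)) (blocks c \<psi>s))"
    unfolding map_map o_def using Bb nonempty finite_R finite_S
    by (intro prod_list_map_mono) (blast intro: max_norm_nonneg)
  also have "\<dots> = prod_list (map Bb (map length (blocks c \<psi>s))) * prod_list (map data_norm (concat (blocks c \<psi>s)))"
    by (simp add: prod_list_map_mult prod_list_map_concat o_def)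
  also have "\<dots> = prod_list (map Bb c) * prod_list (map data_norm \<psi>s)"
    by (simp only: map_length_blocks[OF sc] concat_blocks[OF sc])
  finally show ?thesis .
qed

lemma iborn_bounded_length:
  "\<exists>C\<ge>0. \<forall>\<psi>s. length \<psi>s = n \<longrightarrow> (\<forall>v\<in>V. cmod (iborn \<psi>s v) \<le> C * prod_list (map data_norm \<psi>s))"
proof (induction n rule: less_induct)
  case (less n)
  consider "n = 0" | "n = 1" | "2 \<le> n" by linarith
  then show ?case
  proof cases
    case 1
    then show ?thesis by (auto simp: inv_born_Nil)
  next
    case 2
    obtain CL where "CL \<ge> 0" "\<forall>\<psi>. \<forall>v\<in>V. cmod (L \<psi> v) \<le> CL * data_norm \<psi>" using L_bounded by blast
    then show ?thesis using 2 by (auto simp: length_Suc_conv inv_born_single)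
  next
    case 3
    obtain Cf where Cf: "\<And>m. m < n \<Longrightarrow> Cf m \<ge> 0 \<and> (\<forall>\<psi>s. length \<psi>s = m \<longrightarrow>
        (\<forall>v\<in>V. cmod (iborn \<psi>s v) \<le> Cf m * prod_list (map data_norm \<psi>s)))"
      using less.IH by metis
    obtain Bb where Bb: "\<forall>n. 0 \<le> Bb n" "\<forall>blk. blk \<noteq> [] \<longrightarrow>
        data_norm (block_born blk) \<le> Bb (length blk) * prod_list (map data_norm blk)"
      using block_born_bound by blast
    define C where "C = (\<Sum>c\<in>proper_compositions n. Cf (length c) * prod_list (map Bb c))"
    have "cmod (iborn \<psi>s v) \<le> C * prod_list (map data_norm \<psi>s)" if len: "length \<psi>s = n" and v: "v \<in> V"
      for \<psi>s v
    proof -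
      have block: "cmod (iborn (map block_born (blocks c \<psi>s)) v)
          \<le> Cf (length c) * (prod_list (map Bb c) * prod_list (map data_norm \<psi>s))"
        if c: "c \<in> proper_compositions n" for c
      proof -
        have lc: "length c < n" and "c \<in> compositions (length \<psi>s)"
          using c len 3 by (auto simp: proper_compositions_def)
        then have "Cf (length c) * prod_list (map data_norm (map block_born (blocks c \<psi>s)))
            \<le> Cf (length c) * (prod_list (map Bb c) * prod_list (map data_norm \<psi>s))"
          using Cf[OF lc] by (intro mult_left_mono prod_data_norm_blocks_le[OF Bb(2)]) auto
        moreover have "cmod (iborn (map block_born (blocks c \<psi>s)) v)
            \<le> Cf (length c) * prod_list (map data_norm (map block_born (blocks c \<psi>s)))"
          using conjunct2[OF Cf[OF lc], rule_format, of "map block_born (blocks c \<psi>s)"] v by simp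
        ultimately show ?thesis by (rule order.trans[rotated])
      qed
      have "cmod (iborn \<psi>s v) \<le> (\<Sum>c\<in>proper_compositions n. cmod (iborn (map block_born (blocks c \<psi>s)) v))"
        using inv_born_rec[of \<psi>s] len 3 by (simp add: norm_sum)
      also have "\<dots> \<le> C * prod_list (map data_norm \<psi>s)"
        unfolding C_def sum_distrib_right using block by (intro sum_mono) (simp add: mult.assoc)
      finally show ?thesis .
    qed
    moreover have "0 \<le> C" unfolding C_def
      using Cf Bb(1) 3 by (intro sum_nonneg mult_nonneg_nonneg prod_list_nonneg)
        (auto simp: proper_compositions_def)
    ultimately show ?thesis by blast
  qed
qed

lemma iborn_bounded:
  "\<exists>Cf. (\<forall>n. 0 \<le> Cf n) \<and> (\<forall>\<psi>s. \<forall>v\<in>V. cmod (iborn \<psi>s v) \<le> Cf (length \<psi>s) * prod_list (map data_norm \<psi>s))"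
proof -
  obtain Cf where "\<And>n. Cf n \<ge> 0 \<and> (\<forall>\<psi>s. length \<psi>s = n \<longrightarrow>
      (\<forall>v\<in>V. cmod (iborn \<psi>s v) \<le> Cf n * prod_list (map data_norm \<psi>s)))"
    using iborn_bounded_length by metis
  then show ?thesis by blast
qed

end

section \<open>Convergence of the inverse Born series\<close>

lemma power_le_high_order:
  fixes k t \<mu> :: real
  assumes "0 \<le> k" "0 \<le> t" "0 \<le> \<mu>" "\<mu> * t \<le> 1" "m \<le> N" "N < n"
  shows "(k * t) ^ m * (\<mu> * t) ^ (n - m) \<le> k ^ m * \<mu> ^ (N + 1 - m) * t ^ (N + 1)"
proof -
  have "(\<mu> * t) ^ (n - m) = (\<mu> * t) ^ (N + 1 - m) * (\<mu> * t) ^ (n - N - 1)"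
    using assms by (simp flip: power_add)
  also have "\<dots> \<le> (\<mu> * t) ^ (N + 1 - m)"
    using assms by (intro mult_left_le power_le_one) auto
  finally have "(k * t) ^ m * (\<mu> * t) ^ (n - m) \<le> (k * t) ^ m * (\<mu> * t) ^ (N + 1 - m)"
    using assms by (intro mult_left_mono) auto
  also have "\<dots> = k ^ m * \<mu> ^ (N + 1 - m) * t ^ (m + (N + 1 - m))"
    by (simp add: power_mult_distrib power_add mult_ac)
  finally show ?thesis using assms by simp
qed

definition high_order_lists :: "nat \<Rightarrow> nat list set" where
  "high_order_lists N = {c. set c \<subseteq> {1..N + 1} \<and> 1 \<le> length c \<and> length c \<le> N \<and> N < sum_list c}"

lemma finite_high_order_lists: "finite (high_order_lists N)"
  by (rule finite_subset[OF _ finite_lists_length_le[of "{1..N + 1}" N]])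
    (auto simp: high_order_lists_def)

lemma low_order_lists_eq_compositions:
  "{c. set c \<subseteq> {1..N + 1} \<and> 1 \<le> length c \<and> length c \<le> N \<and> sum_list c \<le> N} = (\<Union>n\<in>{1..N}. compositions n)"
proof (intro set_eqI iffI)
  fix c assume c: "c \<in> {c. set c \<subseteq> {1..N + 1} \<and> 1 \<le> length c \<and> length c \<le> N \<and> sum_list c \<le> N}"
  then have "\<forall>i\<in>set c. 1 \<le> i" by auto
  with c show "c \<in> (\<Union>n\<in>{1..N}. compositions n)"
    using length_le_sum_list by (fastforce simp: compositions_def)
next
  fix c assume "c \<in> (\<Union>n\<in>{1..N}. compositions n)"
  then obtain n where n: "1 \<le> n" "n \<le> N" and pos: "\<forall>i\<in>set c. 1 \<le> i" and sc: "sum_list c = n"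
    by (auto simp: compositions_def)
  have "\<forall>i\<in>set c. i \<le> n" using sc member_le_sum_list by fastforce
  moreover have "c \<noteq> []" using sc n by auto
  ultimately show "c \<in> {c. set c \<subseteq> {1..N + 1} \<and> 1 \<le> length c \<and> length c \<le> N \<and> sum_list c \<le> N}"
    using pos n sc length_le_sum_list[OF pos] by (fastforce simp: Suc_le_eq)
qed

context inverse_born
begin

lemma sum_iborn_compositions_eq_0:
  assumes v: "v \<in> V" and n: "2 \<le> n"
  shows "(\<Sum>c\<in>compositions n. iborn (map (\<lambda>i. born V \<alpha>0 G0 (replicate i \<eta>)) c) v) = 0"
proof -
  define K where "K = (\<lambda>i. born V \<alpha>0 G0 (replicate i \<eta>))"
  have "map block_born (blocks c (replicate n (K 1))) = map K c" if "c \<in> proper_compositions n" for c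
  proof -
    have "sum_list c = n" using that by (auto simp: proper_compositions_def compositions_def)
    then have "map block_born (blocks c (replicate n (K 1))) = map (\<lambda>i. born V \<alpha>0 G0 (replicate i (L (K 1)))) c"
      by (simp add: blocks_replicate)
    also have "\<dots> = map K c" unfolding K_def
      using L_left_inverse[of \<eta>] by (intro map_cong refl born_cong) (auto simp: list_all2_iff set_zip)
    finally show ?thesis .
  qed
  then have "iborn (replicate n (K 1)) v = - (\<Sum>c\<in>proper_compositions n. iborn (map K c) v)"
    using inv_born_rec[of "replicate n (K 1)"] n by simp
  moreover have "replicate n 1 \<notin> proper_compositions n" using n by (auto simp: proper_compositions_def)
  moreover have "finite (proper_compositions n)"
    using finite_compositions[of n] by (simp add: proper_compositions_def)
  ultimately show ?thesis
    using n by (simp add: compositions_eq_insert_proper flip: K_def)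
qed

lemma sum_iborn_compositions:
  assumes "v \<in> V" "1 \<le> N"
  shows "(\<Sum>n=1..N. \<Sum>c\<in>compositions n. iborn (map (\<lambda>i. born V \<alpha>0 G0 (replicate i \<eta>)) c) v) = \<eta> v"
proof -
  have "proper_compositions 1 = {}" by (auto simp: proper_compositions_def)
  then have "compositions 1 = {[1]}" using compositions_eq_insert_proper[of 1] by simp
  then have "(\<Sum>c\<in>compositions 1. iborn (map (\<lambda>i. born V \<alpha>0 G0 (replicate i \<eta>)) c) v) = \<eta> v"
    using assms L_left_inverse by (simp add: inv_born_single)
  moreover have "(\<Sum>n=2..N. \<Sum>c\<in>compositions n. iborn (map (\<lambda>i. born V \<alpha>0 G0 (replicate i \<eta>)) c) v) = 0"
    using assms sum_iborn_compositions_eq_0 by (intro sum.neutral) auto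
  ultimately show ?thesis
    unfolding sum.atLeast_Suc_atMost[OF assms(2)] by (simp add: numeral_2_eq_2)
qed

lemma sum_iborn_replicate_expansion:
  assumes v: "v \<in> V" and N: "1 \<le> N" and P: "\<forall>i\<in>{1..N}. P i = born V \<alpha>0 G0 (replicate i \<eta>)"
  shows "(\<Sum>j=1..N. iborn (replicate j (\<lambda>r s. \<Sum>i=1..N + 1. P i r s)) v)
           = \<eta> v + (\<Sum>c\<in>high_order_lists N. iborn (map P c) v)"
proof -
  define U1 where "U1 = {c. set c \<subseteq> {1..N + 1} \<and> 1 \<le> length c \<and> length c \<le> N \<and> sum_list c \<le> N}"
  have fin: "finite {1..N + 1}" "finite U1" "finite (high_order_lists N)"
    unfolding U1_def low_order_lists_eq_compositions
    using finite_compositions finite_high_order_lists by auto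
  have "(\<Sum>j=1..N. iborn (replicate j (\<lambda>r s. \<Sum>i=1..N + 1. P i r s)) v)
      = (\<Sum>j=1..N. \<Sum>c\<in>{c. set c \<subseteq> {1..N + 1} \<and> length c = j}. iborn (map P c) v)"
    by (intro sum.cong refl) (rule iborn_replicate_sum[OF fin(1) v, of "[]", unfolded append_Nil])
  also have "\<dots> = (\<Sum>c\<in>(\<Union>j\<in>{1..N}. {c. set c \<subseteq> {1..N + 1} \<and> length c = j}). iborn (map P c) v)"
    by (rule sum.UNION_disjoint[symmetric]) (simp, use finite_lists_length_eq[OF fin(1)] in blast, auto)
  also have "(\<Union>j\<in>{1..N}. {c. set c \<subseteq> {1..N + 1} \<and> length c = j}) = U1 \<union> high_order_lists N"
    by (auto simp: U1_def high_order_lists_def)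
  also have "(\<Sum>c\<in>U1 \<union> high_order_lists N. iborn (map P c) v)
      = (\<Sum>c\<in>U1. iborn (map P c) v) + (\<Sum>c\<in>high_order_lists N. iborn (map P c) v)"
    using fin by (intro sum.union_disjoint) (auto simp: U1_def high_order_lists_def)
  also have "(\<Sum>c\<in>U1. iborn (map P c) v) = (\<Sum>n=1..N. \<Sum>c\<in>compositions n. iborn (map P c) v)"
    unfolding U1_def low_order_lists_eq_compositions
    by (rule sum.UNION_disjoint) (simp, simp add: finite_compositions, auto simp: compositions_def)
  also have "\<dots> = (\<Sum>n=1..N. \<Sum>c\<in>compositions n. iborn (map (\<lambda>i. born V \<alpha>0 G0 (replicate i \<eta>)) c) v)"
  proof (intro sum.cong refl)
    fix n c assume "n \<in> {1..N}" "c \<in> compositions n"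
    then have "\<forall>i\<in>set c. i \<in> {1..N}" using member_le_sum_list by (fastforce simp: compositions_def)
    then have "map P c = map (\<lambda>i. born V \<alpha>0 G0 (replicate i \<eta>)) c" using P by simp
    then show "iborn (map P c) v = iborn (map (\<lambda>i. born V \<alpha>0 G0 (replicate i \<eta>)) c) v" by (simp only:)
  qed
  finally show ?thesis by (simp only: sum_iborn_compositions[OF v N])
qed

lemma norm_sum_high_order_le:
  assumes Cf: "\<forall>n. 0 \<le> Cf n" "\<forall>\<psi>s. \<forall>v\<in>V. cmod (iborn \<psi>s v) \<le> Cf (length \<psi>s) * prod_list (map data_norm \<psi>s)"
    and k: "0 \<le> k" and t: "0 \<le> t" and \<mu>: "0 \<le> \<mu>" "\<mu> * t \<le> 1"
    and P: "\<forall>i\<in>{1..N + 1}. data_norm (P i) \<le> k * t * (\<mu> * t) ^ (i - 1)" and v: "v \<in> V"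
  shows "cmod (\<Sum>c\<in>high_order_lists N. iborn (map P c) v)
           \<le> (\<Sum>c\<in>high_order_lists N. Cf (length c) * k ^ length c * \<mu> ^ (N + 1 - length c)) * t ^ (N + 1)"
proof -
  have "cmod (iborn (map P c) v) \<le> Cf (length c) * k ^ length c * \<mu> ^ (N + 1 - length c) * t ^ (N + 1)"
    if c: "c \<in> high_order_lists N" for c
  proof -
    have pos: "\<forall>i\<in>set c. 1 \<le> i" and cI: "set c \<subseteq> {1..N + 1}" and lc: "length c \<le> N" and sc: "N < sum_list c"
      using c by (auto simp: high_order_lists_def)
    have "prod_list (map data_norm (map P c)) \<le> prod_list (map (\<lambda>i. k * t * (\<mu> * t) ^ (i - 1)) c)"
      unfolding map_map o_def using cI P finite_R finite_S
      by (intro prod_list_map_mono) (auto intro: max_norm_nonneg)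
    also have "\<dots> = (k * t) ^ length c * (\<mu> * t) ^ (sum_list c - length c)"
      using prod_list_map_mult_power_pred[OF pos] .
    also have "\<dots> \<le> k ^ length c * \<mu> ^ (N + 1 - length c) * t ^ (N + 1)"
      using power_le_high_order[OF k t \<mu> lc sc] .
    finally have "Cf (length c) * prod_list (map data_norm (map P c))
        \<le> Cf (length c) * (k ^ length c * \<mu> ^ (N + 1 - length c) * t ^ (N + 1))"
      using Cf(1) by (intro mult_left_mono) auto
    moreover have "cmod (iborn (map P c) v) \<le> Cf (length c) * prod_list (map data_norm (map P c))"
      using Cf(2) v by (metis length_map)
    ultimately show ?thesis by (simp only: mult.assoc)
  qed
  then have "cmod (\<Sum>c\<in>high_order_lists N. iborn (map P c) v)
      \<le> (\<Sum>c\<in>high_order_lists N. Cf (length c) * k ^ length c * \<mu> ^ (N + 1 - length c) * t ^ (N + 1))"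
    by (intro order.trans[OF norm_sum sum_mono])
  then show ?thesis by (simp add: sum_distrib_right)
qed

definition "born_series \<eta> = (\<lambda>r s. \<Sum>j. born V \<alpha>0 G0 (replicate (Suc j) \<eta>) r s)"

text \<open>The data split into its first \<open>N\<close> Born terms and the tail, stored at index \<open>N + 1\<close>.\<close>
definition "born_split N \<eta> i =
  (if i \<le> N then born V \<alpha>0 G0 (replicate i \<eta>)
   else (\<lambda>r s. born_series \<eta> r s - (\<Sum>i=1..N. born V \<alpha>0 G0 (replicate i \<eta>) r s)))"

lemma born_series_eq_sum_split: "born_series \<eta> = (\<lambda>r s. \<Sum>i=1..N + 1. born_split N \<eta> i r s)"
proof (intro ext)
  fix r s
  have "(\<Sum>i=1..N. born_split N \<eta> i r s) = (\<Sum>i=1..N. born V \<alpha>0 G0 (replicate i \<eta>) r s)"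
    by (intro sum.cong) (auto simp: born_split_def)
  then show "born_series \<eta> r s = (\<Sum>i=1..N + 1. born_split N \<eta> i r s)"
    by (simp add: born_split_def)
qed

lemma norm_born_replicate_le:
  "r \<in> R \<Longrightarrow> s \<in> S \<Longrightarrow> cmod (born V \<alpha>0 G0 (replicate (Suc j) \<eta>) r s)
     \<le> \<alpha>0 * green_RV_bound * green_VS_bound * lpnorm V p \<eta> * (mu V \<alpha>0 G0 p * lpnorm V p \<eta>) ^ j"
  using norm_born_Cons_data_le[of r s \<eta> "replicate j \<eta>"] by simp

lemma born_series_tail_le:
  assumes x: "mu V \<alpha>0 G0 p * lpnorm V p \<eta> < 1" and "r \<in> R" "s \<in> S"
  shows "cmod (born_series \<eta> r s - (\<Sum>i=1..N. born V \<alpha>0 G0 (replicate i \<eta>) r s))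
     \<le> \<alpha>0 * green_RV_bound * green_VS_bound * lpnorm V p \<eta> * (mu V \<alpha>0 G0 p * lpnorm V p \<eta>) ^ N
         / (1 - mu V \<alpha>0 G0 p * lpnorm V p \<eta>)"
proof -
  define x where "x = mu V \<alpha>0 G0 p * lpnorm V p \<eta>"
  define k where "k = \<alpha>0 * green_RV_bound * green_VS_bound * lpnorm V p \<eta>"
  define f where "f = (\<lambda>j. born V \<alpha>0 G0 (replicate (Suc j) \<eta>) r s)"
  have x0: "0 \<le> x" unfolding x_def using finite_V alpha_pos by (simp add: mu_nonneg lpnorm_nonneg)
  have f: "norm (f j) \<le> k * x ^ j" for j unfolding f_def k_def x_def using assms(2,3) by (rule norm_born_replicate_le)
  have geom: "summable (\<lambda>j. c * x ^ j)" for c using x0 x by (simp add: x_def)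
  have "summable f" by (rule summable_comparison_test[OF _ geom[of k]]) (use f in auto)
  moreover have "(\<Sum>i=1..N. born V \<alpha>0 G0 (replicate i \<eta>) r s) = sum f {..<N}"
    unfolding One_nat_def sum.atLeast1_atMost_eq f_def ..
  moreover have "born_series \<eta> r s = suminf f" unfolding born_series_def f_def ..
  ultimately have "born_series \<eta> r s - (\<Sum>i=1..N. born V \<alpha>0 G0 (replicate i \<eta>) r s) = (\<Sum>j. f (j + N))"
    using suminf_split_initial_segment[of f N] by simp
  also have "norm \<dots> \<le> (\<Sum>j. k * x ^ N * x ^ j)"
    using f[of "_ + N"] by (intro norm_suminf_le geom) (simp add: power_add mult_ac)
  also have "\<dots> = k * x ^ N / (1 - x)"
    using x0 x by (simp add: suminf_mult summable_geometric suminf_geometric x_def divide_inverse)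
  finally show ?thesis by (simp add: k_def x_def)
qed

lemma data_norm_born_split_le:
  assumes small: "mu V \<alpha>0 G0 p * lpnorm V p \<eta> < a" and a: "a < 1" and i: "i \<in> {1..N + 1}"
  shows "data_norm (born_split N \<eta> i)
     \<le> \<alpha>0 * green_RV_bound * green_VS_bound / (1 - a) * lpnorm V p \<eta> * (mu V \<alpha>0 G0 p * lpnorm V p \<eta>) ^ (i - 1)"
proof (rule max_norm_le[OF finite_R finite_S])
  define K where "K = \<alpha>0 * green_RV_bound * green_VS_bound"
  define t where "t = lpnorm V p \<eta>"
  define x where "x = mu V \<alpha>0 G0 p * t"
  have t0: "0 \<le> t" unfolding t_def using finite_V by (rule lpnorm_nonneg)
  have x0: "0 \<le> x" unfolding x_def using finite_V alpha_pos t0 by (simp add: mu_nonneg)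
  have K0: "0 \<le> K" unfolding K_def using alpha_pos green_bounds_nonneg by simp
  have a0: "0 < a" using small x0 by (simp add: x_def t_def)
  have KK: "K \<le> K / (1 - a)" using K0 a a0 by (simp add: le_divide_eq mult_left_le)
  show "0 \<le> \<alpha>0 * green_RV_bound * green_VS_bound / (1 - a) * lpnorm V p \<eta> * (mu V \<alpha>0 G0 p * lpnorm V p \<eta>) ^ (i - 1)"
    using K0 t0 x0 a by (simp flip: K_def t_def x_def)
  fix r s assume rs: "r \<in> R" "s \<in> S"
  have "cmod (born_split N \<eta> i r s) \<le> K / (1 - a) * t * x ^ (i - 1)"
  proof (cases "i \<le> N")
    case True
    then have "cmod (born_split N \<eta> i r s) \<le> K * t * x ^ (i - 1)"
      using i norm_born_replicate_le[OF rs, of "i - 1" \<eta>] by (simp add: born_split_def K_def t_def x_def)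
    also have "\<dots> \<le> K / (1 - a) * t * x ^ (i - 1)" using KK t0 x0 by (intro mult_right_mono) auto
    finally show ?thesis .
  next
    case False
    then have "i = N + 1" using i by simp
    then have "cmod (born_split N \<eta> i r s) \<le> K * t * x ^ N / (1 - x)"
      using born_series_tail_le[OF _ rs, of \<eta> N] small a by (simp add: born_split_def K_def t_def x_def)
    also have "\<dots> \<le> K * t * x ^ N / (1 - a)"
      using K0 t0 x0 small a by (intro divide_left_mono mult_nonneg_nonneg) (auto simp: x_def t_def)
    finally show ?thesis using \<open>i = N + 1\<close> by simp
  qed
  then show "cmod (born_split N \<eta> i r s) \<le> \<alpha>0 * green_RV_bound * green_VS_bound / (1 - a) * lpnorm V p \<eta>
      * (mu V \<alpha>0 G0 p * lpnorm V p \<eta>) ^ (i - 1)"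
    by (simp add: K_def t_def x_def)
qed

lemma inverse_born_error_bound:
  assumes N: "1 \<le> N" and a: "0 < a" "a < 1"
  shows "\<exists>C. \<forall>\<eta>. mu V \<alpha>0 G0 p * lpnorm V p \<eta> < a \<longrightarrow>
     lpnorm V p (\<lambda>v. \<eta> v - (\<Sum>j=1..N. iborn (replicate j (born_series \<eta>)) v)) \<le> C * lpnorm V p \<eta> ^ (N + 1)"
proof -
  obtain Cf where Cf: "\<forall>n. 0 \<le> Cf n"
    "\<forall>\<psi>s. \<forall>v\<in>V. cmod (iborn \<psi>s v) \<le> Cf (length \<psi>s) * prod_list (map data_norm \<psi>s)"
    using iborn_bounded by blast
  define \<mu> where "\<mu> = mu V \<alpha>0 G0 p"
  define k where "k = \<alpha>0 * green_RV_bound * green_VS_bound / (1 - a)"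
  define A where "A = (\<Sum>c\<in>high_order_lists N. Cf (length c) * k ^ length c * \<mu> ^ (N + 1 - length c))"
  have \<mu>0: "0 \<le> \<mu>" unfolding \<mu>_def using finite_V alpha_pos by (simp add: mu_nonneg)
  have k0: "0 \<le> k" unfolding k_def using alpha_pos green_bounds_nonneg a by simp
  have A0: "0 \<le> A" unfolding A_def using Cf(1) k0 \<mu>0 by (intro sum_nonneg) auto
  have "lpnorm V p (\<lambda>v. \<eta> v - (\<Sum>j=1..N. iborn (replicate j (born_series \<eta>)) v))
      \<le> ((real (card V) + 1) * A) * lpnorm V p \<eta> ^ (N + 1)"
    if small: "\<mu> * lpnorm V p \<eta> < a" for \<eta>
  proof -
    define t where "t = lpnorm V p \<eta>"
    have t0: "0 \<le> t" unfolding t_def using finite_V by (rule lpnorm_nonneg)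
    have "cmod (\<eta> v - (\<Sum>j=1..N. iborn (replicate j (born_series \<eta>)) v)) \<le> A * t ^ (N + 1)"
      if v: "v \<in> V" for v
    proof -
      have "(\<Sum>j=1..N. iborn (replicate j (born_series \<eta>)) v)
          = \<eta> v + (\<Sum>c\<in>high_order_lists N. iborn (map (born_split N \<eta>) c) v)"
        unfolding born_series_eq_sum_split[of _ N]
        by (rule sum_iborn_replicate_expansion[OF v N]) (simp add: born_split_def)
      moreover have "cmod (\<Sum>c\<in>high_order_lists N. iborn (map (born_split N \<eta>) c) v) \<le> A * t ^ (N + 1)"
        unfolding A_def
        by (rule norm_sum_high_order_le[OF Cf k0 t0 \<mu>0 _ _ v])
          (use small a data_norm_born_split_le in \<open>auto simp: \<mu>_def t_def k_def\<close>)
      ultimately show ?thesis by simp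
    qed
    then show ?thesis
      using lpnorm_le_card_bound[OF finite_V p_ge_1] A0 t0 by (simp add: t_def mult.assoc)
  qed
  then show ?thesis unfolding \<mu>_def by blast
qed

end

theorem mainTheorem8:
  fixes V dV R S :: "'a set" and \<alpha>0 :: real and G0 :: "'a \<Rightarrow> 'a \<Rightarrow> complex"
    and p :: ereal
    and K1inv :: "('a \<Rightarrow> 'a \<Rightarrow> complex) \<Rightarrow> ('a \<Rightarrow> complex)"
    and N :: nat and a :: real
  assumes "finite V" "finite dV" "V \<inter> dV = {}"
    and "R \<subseteq> dV" "S \<subseteq> dV" "R \<noteq> {}" "S \<noteq> {}"
    and "\<alpha>0 > 0"
    and "1 \<le> p"
    \<comment> \<open>K1inv is a well-defined map C^(R x S) -> C^V (depends only on values on R x S)\<close>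
    and "\<And>\<phi> \<psi>. (\<forall>r\<in>R. \<forall>s\<in>S. \<phi> r s = \<psi> r s) \<Longrightarrow> (\<forall>v\<in>V. K1inv \<phi> v = K1inv \<psi> v)"
    \<comment> \<open>K1inv is linear\<close>
    and "\<And>\<phi> \<psi> c. \<forall>v\<in>V. K1inv (\<lambda>r s. c * \<phi> r s + \<psi> r s) v = c * K1inv \<phi> v + K1inv \<psi> v"
    \<comment> \<open>K_1 : C^V -> C^(R x S) is injective\<close>
    and "\<And>\<eta> \<eta>'. (\<forall>r\<in>R. \<forall>s\<in>S. born V \<alpha>0 G0 [\<eta>] r s = born V \<alpha>0 G0 [\<eta>'] r s)
            \<Longrightarrow> (\<forall>v\<in>V. \<eta> v = \<eta>' v)"
    \<comment> \<open>K1inv is a left inverse of K_1\<close>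
    and "\<And>\<eta>. \<forall>v\<in>V. K1inv (born V \<alpha>0 G0 [\<eta>]) v = \<eta> v"
    and "N \<ge> 1" and "0 < a" and "a < 1"
  shows "\<exists>C :: real. \<forall>\<eta> :: 'a \<Rightarrow> complex.
           mu V \<alpha>0 G0 p * lpnorm V p \<eta> < a \<longrightarrow>
           (let \<phi> = (\<lambda>r s. \<Sum>j. born V \<alpha>0 G0 (replicate (Suc j) \<eta>) r s)
            in lpnorm V p (\<lambda>v. \<eta> v - (\<Sum>j=1..N. inv_born V \<alpha>0 G0 K1inv (replicate j \<phi>) v))
                 \<le> C * lpnorm V p \<eta> ^ (N + 1))"
proof -
  interpret inverse_born V R S \<alpha>0 G0 p K1inv
    using assms finite_subset by unfold_locales blast+
  from inverse_born_error_bound[OF \<open>N \<ge> 1\<close> \<open>0 < a\<close> \<open>a < 1\<close>] show ?thesis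
    unfolding Let_def born_series_def .
qed

end
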